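(* Let $m\geq 13$ and $k\geq 1$ be integers and let $c(x)=1+\sum_{j\in\{2,3,6\}}(x^j+x^{m-j})\in\mathbb{F}_2[x]$. Then $\gcd(c(x^k),x^m-1)=1$ if and only if $\gcd(m,3k)=\gcd(m,7k)=\gcd(m,k)$.
   Context: All polynomials are over $\mathbb{F}_2$. *)

theory Defs
  imports "Berlekamp_Zassenhaus.Finite_Field"
begin

text \<open>The field F_2 is modelled as integers modulo CARD(bool) = 2.\<close>
type_synonym gf2 = "bool mod_ring"

definition c_poly :: "nat \<Rightarrow> gf2 poly" where
  "c_poly m = 1 + (\<Sum>j\<in>{2,3,6::nat}. monom 1 j + monom 1 (m - j))"

end

theory Submission imports Defs begin

text \<open>
  Put \<open>y = x^k\<close> and \<open>S\<^sub>d(y) = 1 + y + \<dots> + y^(d-1)\<close>. Modulo \<open>y^m - 1\<close>, hence modulo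
  \<open>x^m - 1\<close>, the polynomial \<open>y^6 c(y)\<close> reduces to \<open>1 + y^3 + y^4 + y^6 + y^8 + y^9 + y^12\<close>,
  which in characteristic 2 equals \<open>S\<^sub>3(y)^3 S\<^sub>7(y)\<close>; and \<open>x\<close> is invertible modulo \<open>x^m - 1\<close>.
  So everything reduces to deciding when \<open>S\<^sub>d(y)\<close> is coprime to \<open>x^m - 1\<close>, using
  \<open>(y - 1) S\<^sub>d(y) = x^(dk) - 1\<close> and \<open>gcd(x^a - 1, x^b - 1) = x^gcd(a,b) - 1\<close>.
  If \<open>gcd(m,dk) = gcd(m,k)\<close>, a common factor divides \<open>y - 1\<close>, modulo which \<open>S\<^sub>d(y) \<equiv> d\<close>,
  a unit when \<open>d\<close> is odd. Otherwise \<open>x^gcd(m,dk) - 1\<close> divides \<open>x^m - 1\<close> but, having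
  larger degree, not \<open>x^gcd(m,k) - 1\<close>, so it shares a factor with \<open>S\<^sub>d(y)\<close>.
\<close>

lemma power_diff_one_dvd:
  fixes y :: "'a::comm_ring_1"
  assumes "a dvd b"
  shows "(y ^ a - 1) dvd (y ^ b - 1)"
proof -
  obtain q where "b = a * q" using assms by blast
  then have "y ^ b - 1 = (y ^ a - 1) * (\<Sum>i<q. (y ^ a) ^ i)"
    by (simp add: power_mult power_diff_1_eq)
  then show ?thesis by simp
qed

lemma dvd_power_gcd_diff_one:
  fixes y :: "'a::comm_ring_1"
  shows "p dvd y ^ a - 1 \<Longrightarrow> p dvd y ^ b - 1 \<Longrightarrow> p dvd y ^ gcd a b - 1"
proof (induction a b rule: gcd_nat_induct)
  case (base a)
  then show ?case by simp
next
  case (step a b)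
  have "y ^ a - 1 = y ^ (a mod b) * (y ^ (b * (a div b)) - 1) + (y ^ (a mod b) - 1)"
    by (simp add: algebra_simps flip: power_add)
  moreover have "p dvd y ^ (b * (a div b)) - 1"
    using step.prems(2) power_diff_one_dvd[of b "b * (a div b)" y] dvd_trans by auto
  ultimately have "p dvd y ^ (a mod b) - 1"
    using step.prems(1) by (metis dvd_add_right_iff dvd_mult)
  with step show ?case by (simp add: gcd_non_0_nat[of b a])
qed

lemma degree_x_power_minus_one:
  assumes "n > 0"
  shows "degree ([:0, 1:] ^ n - 1 :: 'a::field poly) = n"
proof -
  have "([:0, 1:] ^ n - 1 :: 'a poly) = monom 1 n - 1"
    by (simp add: monom_altdef)
  moreover have "degree (monom 1 n - 1 :: 'a poly) \<le> n"
    by (rule degree_diff_le) (auto simp: degree_monom_le)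
  moreover have "coeff (monom 1 n - 1 :: 'a poly) n \<noteq> 0"
    using assms by (simp add: coeff_monom coeff_1)
  ultimately show ?thesis by (metis le_antisym le_degree)
qed

lemma diff_one_dvd_geometric_sum_minus_of_nat:
  fixes y :: "'a::comm_ring_1"
  shows "(y - 1) dvd (\<Sum>i<d. y ^ i) - of_nat d"
proof -
  have "(y - 1) dvd (\<Sum>i<d. y ^ i - 1)"
    by (rule dvd_sum) (use power_diff_one_dvd[of 1 _ y] in auto)
  then show ?thesis by (simp add: sum_subtractf)
qed

lemma coprime_geometric_sum_iff:
  fixes d m k :: nat
  assumes d: "of_nat d \<noteq> (0 :: 'a::field_gcd)" and "m > 0" and "k > 0"
  shows "coprime (\<Sum>i<d. ([:0, 1:] ^ k) ^ i :: 'a poly) ([:0, 1:] ^ m - 1)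
         \<longleftrightarrow> gcd m (d * k) = gcd m k"
proof -
  define X where "X = ([:0, 1:] :: 'a poly)"
  define S where "S = (\<Sum>i<d. (X ^ k) ^ i)"
  define g where "g = gcd m (d * k)"
  have factor: "X ^ (d * k) - 1 = (X ^ k - 1) * S"
    unfolding S_def using power_diff_1_eq[of "X ^ k" d]
    by (simp add: mult.commute flip: power_mult)
  have "g > 0" and "gcd m k > 0" using \<open>m > 0\<close> by (auto simp: g_def)
  have "coprime S (X ^ m - 1) \<longleftrightarrow> g = gcd m k"
  proof
    assume coprime: "coprime S (X ^ m - 1)"
    have dvd_m: "(X ^ g - 1) dvd (X ^ m - 1)"
      by (rule power_diff_one_dvd) (simp add: g_def)
    have "(X ^ g - 1) dvd (X ^ k - 1) * S"
      using power_diff_one_dvd[of g "d * k" X] factor by (simp add: g_def)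
    moreover have "coprime (X ^ g - 1) S"
      using coprime dvd_m by (meson coprime_commute coprime_divisors dvd_refl)
    ultimately have "(X ^ g - 1) dvd (X ^ k - 1)"
      by (metis coprime_dvd_mult_left_iff)
    then have "(X ^ g - 1) dvd (X ^ gcd m k - 1)"
      by (rule dvd_power_gcd_diff_one[OF dvd_m])
    moreover have "X ^ gcd m k - 1 \<noteq> 0"
      using degree_x_power_minus_one[OF \<open>gcd m k > 0\<close>, where 'a='a] \<open>gcd m k > 0\<close>
      by (auto simp: X_def)
    ultimately have "degree (X ^ g - 1) \<le> degree (X ^ gcd m k - 1)"
      by (rule dvd_imp_degree_le)
    then have "g \<le> gcd m k"
      unfolding X_def degree_x_power_minus_one[OF \<open>g > 0\<close>]
        degree_x_power_minus_one[OF \<open>gcd m k > 0\<close>] .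
    moreover have "gcd m k dvd g"
      by (simp add: g_def gcd_mult_right_right_cancel dvd_trans[OF gcd_dvd2])
    ultimately show "g = gcd m k"
      using \<open>g > 0\<close> by (simp add: dvd_imp_le le_antisym)
  next
    assume g: "g = gcd m k"
    show "coprime S (X ^ m - 1)"
    proof (rule coprimeI)
      fix c
      assume "c dvd S" and "c dvd X ^ m - 1"
      then have "c dvd X ^ g - 1"
        using factor dvd_power_gcd_diff_one[of c X m "d * k"]
        by (simp add: g_def)
      moreover have "(X ^ g - 1) dvd (X ^ k - 1)"
        using g by (intro power_diff_one_dvd) simp
      moreover have "(X ^ k - 1) dvd S - of_nat d"
        unfolding S_def by (rule diff_one_dvd_geometric_sum_minus_of_nat)
      ultimately have "c dvd S - of_nat d"
        by (meson dvd_trans)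
      with \<open>c dvd S\<close> have "c dvd [:of_nat d:]"
        by (metis dvd_diff_right_iff of_nat_poly)
      moreover have "is_unit [:of_nat d :: 'a:]"
        using d by (simp add: is_unit_const_poly_iff)
      ultimately show "is_unit c" by (rule dvd_unit_imp_unit)
    qed
  qed
  then show ?thesis by (simp add: S_def X_def g_def)
qed

lemma char_two_factorization:
  fixes y :: "'a::comm_ring_1"
  assumes "CHAR('a) = 2"
  shows "1 + y^3 + y^4 + y^6 + y^8 + y^9 + y^12 = (\<Sum>i<3. y ^ i) ^ 3 * (\<Sum>i<7. y ^ i)"
proof -
  have "(2 :: 'a) = 0"
    using of_nat_CHAR[where 'a='a] assms by simp
  moreover have "(\<Sum>i<3. y ^ i) ^ 3 * (\<Sum>i<7. y ^ i) = (1 + y^3 + y^4 + y^6 + y^8 + y^9 + y^12)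
    + 2 * (2*y + 5*y^2 + 8*y^3 + 11*y^4 + 13*y^5 + 13*y^6 + 13*y^7 + 11*y^8 + 8*y^9
           + 5*y^10 + 2*y^11)"
    by (simp add: eval_nat_numeral algebra_simps)
  ultimately show ?thesis by simp
qed

lemma pcompose_monom_one:
  "pcompose (monom 1 n) q = (q :: 'a::comm_ring_1 poly) ^ n"
  by (induction n) (simp_all add: monom_altdef pcompose_mult pcompose_pCons)

lemma pcompose_c_poly:
  "pcompose (c_poly m) q = 1 + (\<Sum>j\<in>{2,3,6::nat}. q ^ j + q ^ (m - j))"
  unfolding c_poly_def pcompose_add pcompose_1 pcompose_sum pcompose_monom_one by (rule refl)

lemma shifted_c_poly_reduction:
  fixes y :: "'a::comm_ring_1"
  assumes "m \<ge> 6"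
  shows "y ^ 6 * (1 + (\<Sum>j\<in>{2,3,6::nat}. y ^ j + y ^ (m - j)))
    = (1 + y^3 + y^4 + y^6 + y^8 + y^9 + y^12) + (y ^ m - 1) * (y^4 + y^3 + 1)"
proof -
  have shift: "y^6 * y^(m - 2) = y^m * y^4" "y^6 * y^(m - 3) = y^m * y^3" "y^6 * y^(m - 6) = y^m"
    using assms by (simp_all add: add.commute flip: power_add)
  have "y ^ 6 * (1 + (\<Sum>j\<in>{2,3,6::nat}. y ^ j + y ^ (m - j)))
    = y^6 + (y^6 * y^2 + y^6 * y^(m - 2)) + ((y^6 * y^3 + y^6 * y^(m - 3)) + (y^6 * y^6 + y^6 * y^(m - 6)))"
    by (simp add: distrib_left)
  also have "\<dots> = y^6 + (y^8 + y^m * y^4) + ((y^9 + y^m * y^3) + (y^12 + y^m))"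
    unfolding shift by (simp flip: power_add)
  finally show ?thesis
    by (simp add: algebra_simps)
qed

lemma coprime_power_minus_one:
  fixes y :: "'a::{comm_ring_1, algebraic_semidom}"
  assumes "n > 0"
  shows "coprime y (y ^ n - 1)"
proof (rule coprimeI)
  fix c
  assume "c dvd y" and "c dvd y ^ n - 1"
  moreover have "c dvd y ^ n"
    using \<open>c dvd y\<close> assms by (simp add: dvd_power_iff_le dvd_trans dvd_power)
  ultimately show "is_unit c"
    by (metis dvd_diff_right_iff)
qed

lemma coprime_add_mult_of_multiple_iff:
  fixes a b c q :: "'a::{comm_ring_1, algebraic_semidom}"
  assumes "b dvd c"
  shows "coprime (a + c * q) b \<longleftrightarrow> coprime a b"
proof -
  have "x dvd a + c * q \<longleftrightarrow> x dvd a" if "x dvd b" for x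
    using assms that by (meson dvd_add_left_iff dvd_mult2 dvd_trans)
  then show ?thesis by (auto simp: coprime_def)
qed

theorem proposition5:
  fixes m k :: nat
  assumes "m \<ge> 13" and "k \<ge> 1"
  shows "gcd (pcompose (c_poly m) (monom 1 k)) (monom 1 m - 1) = 1
     \<longleftrightarrow> (gcd m (3 * k) = gcd m k \<and> gcd m (7 * k) = gcd m k)"
proof -
  define X where "X = ([:0, 1:] :: gf2 poly)"
  define Y where "Y = X ^ k"
  define E where "E = X ^ m - 1"
  define P where "P = 1 + (\<Sum>j\<in>{2,3,6::nat}. Y ^ j + Y ^ (m - j))"
  define F where "F = 1 + Y^3 + Y^4 + Y^6 + Y^8 + Y^9 + Y^12"
  have reduction: "Y ^ 6 * P = F + (Y ^ m - 1) * (Y^4 + Y^3 + 1)"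
    unfolding P_def F_def using assms(1) by (intro shifted_c_poly_reduction) simp
  have "E dvd Y ^ m - 1"
    using power_diff_one_dvd[of m "k * m" X] by (simp add: E_def Y_def power_mult)
  have "coprime Y E"
    using coprime_power_minus_one[of m X] assms(1) by (simp add: E_def Y_def)
  then have "coprime P E \<longleftrightarrow> coprime (Y ^ 6 * P) E"
    by simp
  also have "\<dots> \<longleftrightarrow> coprime F E"
    unfolding reduction using \<open>E dvd Y ^ m - 1\<close> by (rule coprime_add_mult_of_multiple_iff)
  also have "\<dots> \<longleftrightarrow> coprime (\<Sum>i<3. Y ^ i) E \<and> coprime (\<Sum>i<7. Y ^ i) E"
    unfolding F_def by (simp add: char_two_factorization)
  also have "\<dots> \<longleftrightarrow> gcd m (3 * k) = gcd m k \<and> gcd m (7 * k) = gcd m k"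
  proof -
    have "of_nat 3 \<noteq> (0 :: gf2)" and "of_nat 7 \<noteq> (0 :: gf2)"
      unfolding of_nat_eq_0_iff_char_dvd by simp_all
    then show ?thesis
      using coprime_geometric_sum_iff[where 'a=gf2, of 3 m k]
        coprime_geometric_sum_iff[where 'a=gf2, of 7 m k] assms
      by (simp add: E_def X_def Y_def)
  qed
  finally show ?thesis
    by (simp add: coprime_iff_gcd_eq_1 P_def E_def X_def Y_def pcompose_c_poly monom_altdef)
qed

end
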